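(* Let $\lambda\supseteq\mu$ be partitions and let $T$ be a Dyck tiling of $\lambda\setminus\mu$. The following nine conditions are equivalent: (1) $T$ is cover-inclusive; (2) whenever $\mathfrak a$ and $\mathtt N(\mathfrak a)$ are both nodes of $\lambda\setminus\mu$, we have $\operatorname{dp}(\mathtt N(\mathfrak a))\ge\operatorname{dp}(\mathfrak a)$; (3) whenever $\mathfrak a$ and $\mathtt N(\mathfrak a)$ are both nodes of $\lambda\setminus\mu$, we have $\operatorname{tile}(\mathfrak a)+(1,1)\subseteq\operatorname{tile}(\mathtt N(\mathfrak a))$; (4) whenever $\mathfrak a$ and $\mathtt N(\mathfrak a)$ are nodes of $\lambda\setminus\mu$ and $\mathfrak a$ is attached to $\mathtt{NW}(\mathfrak a)$, the node $\mathtt{NW}(\mathtt N(\mathfrak a))$ lies in $\lambda\setminus\mu$ and $\mathtt N(\mathfrak a)$ is attached to it; (5) whenever $\mathfrak a$ and $\mathtt N(\mathfrak a)$ are nodes of $\lambda\setminus\mu$ and $\mathtt N(\mathfrak a)$ is the end node of its tile, $\mathfrak a$ is the end node of its tile; (6) $T$ is right-cover-inclusive; (7) whenever $\mathfrak a$ and $\mathtt N(\mathfrak a)$ are nodes of $\lambda\setminus\mu$ and $\mathfrak a$ is attached to $\mathtt{NE}(\mathfrak a)$, the node $\mathtt{NE}(\mathtt N(\mathfrak a))$ lies in $\lambda\setminus\mu$ and $\mathtt N(\mathfrak a)$ is attached to it; (8) whenever $\mathfrak a$ and $\mathtt N(\mathfrak a)$ are nodes of $\lambda\setminus\mu$ and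 $\mathtt N(\mathfrak a)$ is the start node of its tile, $\mathfrak a$ is the start node of its tile; (9) $T$ is left-cover-inclusive.
   Context: A partition $\lambda$ is identified with its Young diagram $\{(a,b)\in\mathbb N^2: b\le\lambda_a\}$ ($\mathbb N=\{1,2,\dots\}$); $\lambda\supseteq\mu$ means $\lambda_i\ge\mu_i$ for all $i$, and $\lambda\setminus\mu$ is the set difference of diagrams. Elements of $\mathbb N^2$ are called nodes. The height of $(a,b)$ is $\operatorname{ht}(a,b)=a+b$, and $(a,b)$ lies in column $b-a$; a node is to the left of another if its column index is smaller. Neighbours of a node $\mathfrak n$: $\mathtt{NE}(\mathfrak n)=\mathfrak n+(0,1)$, $\mathtt{SW}(\mathfrak n)=\mathfrak n-(0,1)$, $\mathtt{NW}(\mathfrak n)=\mathfrak n+(1,0)$, $\mathtt{SE}(\mathfrak n)=\mathfrak n-(1,0)$, $\mathtt N(\mathfrak n)=\mathfrak n+(1,1)$, $\mathtt S(\mathfrak n)=\mathfrak n-(1,1)$. A tile is a finite nonempty set $t$ of nodes that can be ordered $\mathfrak n_1,\dots,\mathfrak n_r$ with $\mathfrak n_{i+1}\in\{\mathtt{NE}(\mathfrak n_i),\mathtt{SE}(\mathfrak n_i)\}$; its start $\operatorname{st}(t)$ is its leftmost node and its end $\operatorname{en}(t)$ its rightmost node; $\operatorname{ht}(t)=\max_{\mathfrak n\in t}\operatorname{ht}(\mathfrak n)$; $t$ is a Dyck tile if $\operatorname{ht}(\operatorname{st}t)=\operatorname{ht}(\operatorname{en}t)=\operatorname{ht}(t)$.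 The depth of $\mathfrak n\in t$ is $\operatorname{dp}(\mathfrak n)=\operatorname{ht}(t)-\operatorname{ht}(\mathfrak n)$. A Dyck tiling of $\lambda\setminus\mu$ is a partition of $\lambda\setminus\mu$ into Dyck tiles; $\operatorname{tile}(\mathfrak n)$ is the tile containing $\mathfrak n$, and $\mathfrak n$ is attached to a neighbour if they lie in the same tile. A Dyck tiling is left-cover-inclusive if whenever $\mathfrak a,\mathtt N(\mathfrak a)\in\lambda\setminus\mu$, $\operatorname{st}(\operatorname{tile}(\mathtt N(\mathfrak a)))$ lies weakly to the left of $\operatorname{st}(\operatorname{tile}(\mathfrak a))$; right-cover-inclusive if whenever $\mathfrak a,\mathtt N(\mathfrak a)\in\lambda\setminus\mu$, $\operatorname{en}(\operatorname{tile}(\mathtt N(\mathfrak a)))$ lies weakly to the right of $\operatorname{en}(\operatorname{tile}(\mathfrak a))$; cover-inclusive if both. *)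

theory Defs
  imports Main
begin

type_synonym node = "nat \<times> nat"

text \<open>A partition is a weakly decreasing, eventually zero sequence lam 1, lam 2, ...
  (the value at index 0 is irrelevant).\<close>
definition is_partition :: "(nat \<Rightarrow> nat) \<Rightarrow> bool" where
  "is_partition lam \<longleftrightarrow> (\<forall>i j. 1 \<le> i \<longrightarrow> i \<le> j \<longrightarrow> lam j \<le> lam i)
     \<and> finite {i. 1 \<le> i \<and> lam i \<noteq> 0}"

definition contains :: "(nat \<Rightarrow> nat) \<Rightarrow> (nat \<Rightarrow> nat) \<Rightarrow> bool" where
  "contains lam mu \<longleftrightarrow> (\<forall>i\<ge>1. mu i \<le> lam i)"

definition is_node :: "node \<Rightarrow> bool" where
  "is_node n \<longleftrightarrow> 1 \<le> fst n \<and> 1 \<le> snd n"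

definition diagram :: "(nat \<Rightarrow> nat) \<Rightarrow> node set" where
  "diagram lam = {(a, b). 1 \<le> a \<and> 1 \<le> b \<and> b \<le> lam a}"

definition skew :: "(nat \<Rightarrow> nat) \<Rightarrow> (nat \<Rightarrow> nat) \<Rightarrow> node set" where
  "skew lam mu = diagram lam - diagram mu"

definition ht :: "node \<Rightarrow> nat" where
  "ht n = fst n + snd n"

definition col :: "node \<Rightarrow> int" where
  "col n = int (snd n) - int (fst n)"

definition NE :: "node \<Rightarrow> node" where "NE n = (fst n, snd n + 1)"
definition SW :: "node \<Rightarrow> node" where "SW n = (fst n, snd n - 1)"
definition NW :: "node \<Rightarrow> node" where "NW n = (fst n + 1, snd n)"
definition SE :: "node \<Rightarrow> node" where "SE n = (fst n - 1, snd n)"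
definition N :: "node \<Rightarrow> node" where "N n = (fst n + 1, snd n + 1)"
definition S :: "node \<Rightarrow> node" where "S n = (fst n - 1, snd n - 1)"

definition is_tile :: "node set \<Rightarrow> bool" where
  "is_tile t \<longleftrightarrow> (\<exists>ns. ns \<noteq> [] \<and> set ns = t \<and> (\<forall>n\<in>t. is_node n) \<and>
      (\<forall>i. Suc i < length ns \<longrightarrow> ns ! Suc i \<in> {NE (ns ! i), SE (ns ! i)}))"

definition st :: "node set \<Rightarrow> node" where
  "st t = (THE n. n \<in> t \<and> (\<forall>m\<in>t. col n \<le> col m))"

definition en :: "node set \<Rightarrow> node" where
  "en t = (THE n. n \<in> t \<and> (\<forall>m\<in>t. col m \<le> col n))"

definition tile_ht :: "node set \<Rightarrow> nat" where
  "tile_ht t = Max (ht ` t)"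

definition is_dyck_tile :: "node set \<Rightarrow> bool" where
  "is_dyck_tile t \<longleftrightarrow> is_tile t \<and> ht (st t) = tile_ht t \<and> ht (en t) = tile_ht t"

definition is_dyck_tiling :: "node set set \<Rightarrow> node set \<Rightarrow> bool" where
  "is_dyck_tiling T R \<longleftrightarrow> (\<forall>t\<in>T. is_dyck_tile t) \<and> \<Union>T = R \<and>
      (\<forall>t\<in>T. \<forall>u\<in>T. t \<noteq> u \<longrightarrow> t \<inter> u = {})"

definition tile_of :: "node set set \<Rightarrow> node \<Rightarrow> node set" where
  "tile_of T n = (THE t. t \<in> T \<and> n \<in> t)"

definition attached :: "node set set \<Rightarrow> node \<Rightarrow> node \<Rightarrow> bool" where
  "attached T m n \<longleftrightarrow> (\<exists>t\<in>T. m \<in> t \<and> n \<in> t)"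

definition dp :: "node set set \<Rightarrow> node \<Rightarrow> nat" where
  "dp T n = tile_ht (tile_of T n) - ht n"

definition left_cover_inclusive :: "node set set \<Rightarrow> node set \<Rightarrow> bool" where
  "left_cover_inclusive T R \<longleftrightarrow> (\<forall>a. a \<in> R \<and> N a \<in> R \<longrightarrow>
      col (st (tile_of T (N a))) \<le> col (st (tile_of T a)))"

definition right_cover_inclusive :: "node set set \<Rightarrow> node set \<Rightarrow> bool" where
  "right_cover_inclusive T R \<longleftrightarrow> (\<forall>a. a \<in> R \<and> N a \<in> R \<longrightarrow>
      col (en (tile_of T a)) \<le> col (en (tile_of T (N a))))"

definition cover_inclusive :: "node set set \<Rightarrow> node set \<Rightarrow> bool" where
  "cover_inclusive T R \<longleftrightarrow> left_cover_inclusive T R \<and> right_cover_inclusive T R"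

end

theory Submission
  imports Defs "HOL-Library.Product_Order"
begin

text \<open>Condition (3) gives (2), (6) and (9) at once, and (6) \<Longrightarrow> (5), (9) \<Longrightarrow> (8),
  (2) \<Longrightarrow> (4) are local checks. If (4)
  fails at \<open>a\<close>, the tile above \<open>a\<close> starts at \<open>N a\<close>, at height \<open>ht a + 2\<close>, while the tile
  through \<open>a\<close> reaches height \<open>ht a + 1\<close> at \<open>NW a\<close>; since distinct tiles never cross, the upper
  tile ends strictly to the left of the lower one, and climbing the column of its end one meets
  a failure of (5) weakly to the right of \<open>a\<close>. A failure of (5) in turn is a failure of (7) or a
  failure of (4) one column further right. In a finite region this gives (5) \<Longrightarrow> (4) and
  (7) \<Longrightarrow> (4), and transposing the plane, which exchanges north-east with north-west and starts
  with ends, gives (8) \<Longrightarrow> (7) and (4) \<Longrightarrow> (7). Finally, under (4) and (7) every step along a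
  tile lifts to a step inside the tile above, which is (3).\<close>

lemma col_N [simp]: "col (N n) = col n" and ht_N [simp]: "ht (N n) = ht n + 2"
  and col_NE [simp]: "col (NE n) = col n + 1" and ht_NE [simp]: "ht (NE n) = ht n + 1"
  and col_NW [simp]: "col (NW n) = col n - 1" and ht_NW [simp]: "ht (NW n) = ht n + 1"
  by (simp_all add: col_def ht_def N_def NE_def NW_def)

lemma col_SE: "1 \<le> fst n \<Longrightarrow> col (SE n) = col n + 1"
  and ht_SE: "1 \<le> fst n \<Longrightarrow> ht (SE n) + 1 = ht n"
  by (simp_all add: col_def ht_def SE_def)

lemma col_ht_inject: "col x = col y \<Longrightarrow> ht x = ht y \<Longrightarrow> x = y"
  by (cases x; cases y) (auto simp: col_def ht_def)

lemma ht_gap_in_column: "col x = col y \<Longrightarrow> ht x < ht y \<Longrightarrow> ht x + 2 \<le> ht y"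
  by (cases x; cases y) (simp add: col_def ht_def; presburger)

lemma N_NE: "N (NE n) = NE (N n)" and NW_NE: "NW (NE n) = N n"
  by (simp_all add: N_def NE_def NW_def)

lemma NW_SE: "1 \<le> fst n \<Longrightarrow> NW (SE n) = n" and N_SE: "1 \<le> fst n \<Longrightarrow> N (SE n) = NE n"
  by (cases n; simp add: N_def NE_def NW_def SE_def)+

lemma tile_enumerationE:
  assumes "is_tile t"
  obtains ns where "ns \<noteq> []" "set ns = t"
    "\<And>i. i < length ns \<Longrightarrow> col (ns ! i) = col (ns ! 0) + int i"
    "\<And>i. Suc i < length ns \<Longrightarrow> ns ! Suc i \<in> {NE (ns ! i), SE (ns ! i)}"
proof -
  obtain ns where ns: "ns \<noteq> []" "set ns = t" "\<forall>n\<in>t. is_node n"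
    and step: "\<And>i. Suc i < length ns \<Longrightarrow> ns ! Suc i \<in> {NE (ns ! i), SE (ns ! i)}"
    using assms unfolding is_tile_def by blast
  have "col (ns ! i) = col (ns ! 0) + int i" if "i < length ns" for i
    using that
  proof (induction i)
    case (Suc i)
    have "1 \<le> fst (ns ! i)"
      using ns Suc.prems by (auto simp: is_node_def)
    then have "col (ns ! Suc i) = col (ns ! i) + 1"
      using step[OF Suc.prems] by (auto simp: col_SE)
    with Suc show ?case by simp
  qed simp
  with ns step show thesis by (intro that) auto
qed

lemma tile_finite: "is_tile t \<Longrightarrow> finite t"
  and tile_nonempty: "is_tile t \<Longrightarrow> t \<noteq> {}"
  and tile_node: "is_tile t \<Longrightarrow> n \<in> t \<Longrightarrow> is_node n"
  unfolding is_tile_def by auto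

lemma tile_col_inj:
  assumes "is_tile t" shows "inj_on col t"
proof (rule inj_onI)
  fix x y assume xy: "x \<in> t" "y \<in> t" "col x = col y"
  from assms show "x = y"
  proof (rule tile_enumerationE)
    fix ns assume ns: "set ns = t"
      and cols: "\<And>i. i < length ns \<Longrightarrow> col (ns ! i) = col (ns ! 0) + int i"
    obtain i j where "i < length ns" "x = ns ! i" "j < length ns" "y = ns ! j"
      using xy ns by (auto simp: in_set_conv_nth)
    with xy(3) cols show "x = y" by (metis add_left_cancel of_nat_eq_iff)
  qed
qed

lemma tile_col_between:
  assumes "is_tile t" "x \<in> t" "y \<in> t" "col x \<le> k" "k \<le> col y"
  shows "\<exists>z\<in>t. col z = k"
  using assms(1)
proof (rule tile_enumerationE)
  fix ns assume ns: "set ns = t" and cols: "\<And>i. i < length ns \<Longrightarrow> col (ns ! i) = col (ns ! 0) + int i"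
  obtain i j where "i < length ns" "x = ns ! i" "j < length ns" "y = ns ! j"
    using assms(2,3) ns by (auto simp: in_set_conv_nth)
  with assms(4,5) cols have "nat (k - col (ns ! 0)) < length ns" "col (ns ! 0) \<le> k"
    by force+
  with cols ns show ?thesis
    by (intro bexI[of _ "ns ! nat (k - col (ns ! 0))"]) auto
qed

lemma tile_step:
  assumes "is_tile t" "u \<in> t" "x \<in> t" "col x = col u + 1"
  shows "x = NE u \<or> x = SE u"
  using assms(1)
proof (rule tile_enumerationE)
  fix ns assume ns: "set ns = t" and cols: "\<And>i. i < length ns \<Longrightarrow> col (ns ! i) = col (ns ! 0) + int i"
    and step: "\<And>i. Suc i < length ns \<Longrightarrow> ns ! Suc i \<in> {NE (ns ! i), SE (ns ! i)}"
  obtain i j where ij: "i < length ns" "u = ns ! i" "j < length ns" "x = ns ! j"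
    using assms(2,3) ns by (auto simp: in_set_conv_nth)
  with assms(4) cols have "j = Suc i" by fastforce
  with ij step show ?thesis by auto
qed

lemma tile_step_invariant:
  assumes "is_tile t" "a \<in> t" "x \<in> t" "P a"
    and step: "\<And>u y. u \<in> t \<Longrightarrow> y \<in> t \<Longrightarrow> col y = col u + 1 \<Longrightarrow> P u \<longleftrightarrow> P y"
  shows "P x"
  using assms(1)
proof (rule tile_enumerationE)
  fix ns assume ns: "set ns = t" and cols: "\<And>i. i < length ns \<Longrightarrow> col (ns ! i) = col (ns ! 0) + int i"
  have "P (ns ! i) \<longleftrightarrow> P (ns ! 0)" if "i < length ns" for i
    using that
  proof (induction i)
    case (Suc i)
    have "ns ! i \<in> t" "ns ! Suc i \<in> t" using Suc.prems ns by auto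
    with Suc show ?case using step[of "ns ! i" "ns ! Suc i"] cols[of i] cols[of "Suc i"] by simp
  qed simp
  with assms(2-4) ns show "P x" by (metis in_set_conv_nth)
qed

lemma st_eqI:
  assumes "is_tile t" "x \<in> t" "\<And>m. m \<in> t \<Longrightarrow> col x \<le> col m"
  shows "st t = x"
  unfolding st_def
proof (rule the_equality)
  fix y assume "y \<in> t \<and> (\<forall>m\<in>t. col y \<le> col m)"
  with assms have "col y = col x" by (meson order_antisym)
  with assms(1,2) \<open>y \<in> t \<and> _\<close> show "y = x" by (meson inj_onD tile_col_inj)
qed (use assms in auto)

lemma en_eqI:
  assumes "is_tile t" "x \<in> t" "\<And>m. m \<in> t \<Longrightarrow> col m \<le> col x"
  shows "en t = x"
  unfolding en_def
proof (rule the_equality)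
  fix y assume "y \<in> t \<and> (\<forall>m\<in>t. col m \<le> col y)"
  with assms have "col y = col x" by (meson order_antisym)
  with assms(1,2) \<open>y \<in> t \<and> _\<close> show "y = x" by (meson inj_onD tile_col_inj)
qed (use assms in auto)

lemma st_in_tile: "is_tile t \<Longrightarrow> st t \<in> t"
  and st_leftmost: "is_tile t \<Longrightarrow> m \<in> t \<Longrightarrow> col (st t) \<le> col m"
proof -
  assume t: "is_tile t"
  then have "Min (col ` t) \<in> col ` t"
    by (simp add: tile_finite tile_nonempty)
  then obtain x where "x \<in> t" "col x = Min (col ` t)" by auto
  with t have "st t = x" "x \<in> t" "\<forall>m\<in>t. col x \<le> col m"
    by (auto intro!: st_eqI simp: tile_finite)
  then show "st t \<in> t" "m \<in> t \<Longrightarrow> col (st t) \<le> col m" by auto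
qed

lemma en_in_tile: "is_tile t \<Longrightarrow> en t \<in> t"
  and en_rightmost: "is_tile t \<Longrightarrow> m \<in> t \<Longrightarrow> col m \<le> col (en t)"
proof -
  assume t: "is_tile t"
  then have "Max (col ` t) \<in> col ` t"
    by (simp add: tile_finite tile_nonempty)
  then obtain x where "x \<in> t" "col x = Max (col ` t)" by auto
  with t have "en t = x" "x \<in> t" "\<forall>m\<in>t. col m \<le> col x"
    by (auto intro!: en_eqI simp: tile_finite)
  then show "en t \<in> t" "m \<in> t \<Longrightarrow> col m \<le> col (en t)" by auto
qed

lemma st_left_neighbourE:
  assumes "is_tile t" "n \<in> t" "st t \<noteq> n"
  obtains z where "z \<in> t" "n = NE z \<or> n = SE z"
proof -
  have "col (st t) \<noteq> col n"
    using assms inj_onD[OF tile_col_inj] st_in_tile by blast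
  then have "col (st t) \<le> col n - 1"
    using st_leftmost[OF assms(1,2)] by simp
  then obtain z where "z \<in> t" "col n = col z + 1"
    using tile_col_between[OF assms(1) st_in_tile[OF assms(1)] assms(2), of "col n - 1"] by auto
  with assms(1,2) show thesis by (metis that tile_step)
qed

lemma en_right_neighbourE:
  assumes "is_tile t" "n \<in> t" "en t \<noteq> n"
  obtains z where "z \<in> t" "z = NE n \<or> z = SE n"
proof -
  have "col (en t) \<noteq> col n"
    using assms inj_onD[OF tile_col_inj] en_in_tile by blast
  then have "col n + 1 \<le> col (en t)"
    using en_rightmost[OF assms(1,2)] by simp
  then obtain z where "z \<in> t" "col z = col n + 1"
    using tile_col_between[OF assms(1,2) en_in_tile[OF assms(1)], of "col n + 1"] by auto
  with assms(1,2) show thesis by (metis that tile_step)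
qed

lemma ht_le_tile_ht: "is_tile t \<Longrightarrow> n \<in> t \<Longrightarrow> ht n \<le> tile_ht t"
  unfolding tile_ht_def by (simp add: tile_finite)

lemma funpow_N: "(N ^^ k) n = (fst n + k, snd n + k)"
  by (induction k) (simp_all add: N_def)

lemma same_column_above:
  assumes "col z = col y" "ht z < ht y"
  shows "y = (N ^^ (fst y - fst z)) z"
  using assms by (cases z; cases y) (simp add: funpow_N col_def ht_def)

lemma ex_switch_below: "\<not> P (0::nat) \<Longrightarrow> P m \<Longrightarrow> \<exists>k<m. \<not> P k \<and> P (Suc k)"
  by (induction m) (auto, metis less_Suc_eq)

subsection \<open>Transposition\<close>

lemma col_swap [simp]: "col (prod.swap n) = - col n"
  and ht_swap [simp]: "ht (prod.swap n) = ht n"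
  and N_swap: "N (prod.swap n) = prod.swap (N n)"
  and NE_swap: "NE (prod.swap n) = prod.swap (NW n)"
  and NW_swap: "NW (prod.swap n) = prod.swap (NE n)"
  by (simp_all add: col_def ht_def N_def NE_def NW_def)

lemma swap_tile_step:
  assumes "is_node u" "v \<in> {NE u, SE u}"
  shows "prod.swap u \<in> {NE (prod.swap v), SE (prod.swap v)}"
  using assms by (cases u) (auto simp: NE_def SE_def is_node_def)

lemma is_tile_swap:
  assumes "is_tile t" shows "is_tile (prod.swap ` t)"
proof -
  obtain ns where ns: "ns \<noteq> []" "set ns = t" "\<forall>n\<in>t. is_node n"
    and step: "\<And>i. Suc i < length ns \<Longrightarrow> ns ! Suc i \<in> {NE (ns ! i), SE (ns ! i)}"
    using assms unfolding is_tile_def by blast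
  define ms where "ms = rev (map prod.swap ns)"
  have "ms ! Suc i \<in> {NE (ms ! i), SE (ms ! i)}" if i: "Suc i < length ms" for i
  proof -
    define j where "j = length ns - Suc (Suc i)"
    have "Suc j < length ns" "ms ! i = prod.swap (ns ! Suc j)" "ms ! Suc i = prod.swap (ns ! j)"
      using i by (auto simp: ms_def j_def rev_nth Suc_diff_Suc)
    with ns step[of j] show ?thesis
      by (metis Suc_lessD nth_mem swap_tile_step)
  qed
  moreover have "ms \<noteq> []" "set ms = prod.swap ` t" "\<forall>n\<in>prod.swap ` t. is_node n"
    using ns by (auto simp: ms_def is_node_def)
  ultimately show ?thesis unfolding is_tile_def by blast
qed

lemma st_swap: "is_tile t \<Longrightarrow> st (prod.swap ` t) = prod.swap (en t)"
  by (rule st_eqI) (auto simp: is_tile_swap en_in_tile en_rightmost simp del: swap_simp)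

lemma en_swap: "is_tile t \<Longrightarrow> en (prod.swap ` t) = prod.swap (st t)"
  by (rule en_eqI) (auto simp: is_tile_swap st_in_tile st_leftmost simp del: swap_simp)

lemma tile_ht_swap: "tile_ht (prod.swap ` t) = tile_ht t"
  by (simp add: tile_ht_def image_image)

lemma is_dyck_tile_swap: "is_dyck_tile t \<Longrightarrow> is_dyck_tile (prod.swap ` t)"
  by (simp add: is_dyck_tile_def is_tile_swap st_swap en_swap tile_ht_swap)

lemma is_dyck_tiling_swap:
  assumes "is_dyck_tiling T R"
  shows "is_dyck_tiling ((`) prod.swap ` T) (prod.swap ` R)"
proof -
  have "prod.swap ` t \<inter> prod.swap ` u = {}" if "t \<in> T" "u \<in> T" "prod.swap ` t \<noteq> prod.swap ` u" for t u
    using assms that unfolding is_dyck_tiling_def by (metis image_Int image_empty inj_swap)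
  with assms show ?thesis
    unfolding is_dyck_tiling_def by (auto simp: is_dyck_tile_swap)
qed

lemma attached_swap:
  "attached ((`) prod.swap ` T) (prod.swap m) (prod.swap n) \<longleftrightarrow> attached T m n"
  unfolding attached_def by (simp add: inj_image_mem_iff)

subsection \<open>Dyck tilings of order-convex regions\<close>

locale dyck_region =
  fixes T :: "node set set" and R :: "node set"
  assumes dyck_tiling: "is_dyck_tiling T R"
    and finite_region: "finite R"
    and order_convex: "\<And>x y. x \<in> R \<Longrightarrow> y \<in> R \<Longrightarrow> {x..y} \<subseteq> R"
begin

lemma tile_dyck: "t \<in> T \<Longrightarrow> is_dyck_tile t"
  using dyck_tiling unfolding is_dyck_tiling_def by auto

lemma tile_is_tile: "t \<in> T \<Longrightarrow> is_tile t"
  using tile_dyck unfolding is_dyck_tile_def by auto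

lemma tile_subset: "t \<in> T \<Longrightarrow> t \<subseteq> R"
  using dyck_tiling unfolding is_dyck_tiling_def by auto

lemma tiles_disjoint: "t \<in> T \<Longrightarrow> u \<in> T \<Longrightarrow> n \<in> t \<Longrightarrow> n \<in> u \<Longrightarrow> t = u"
  using dyck_tiling unfolding is_dyck_tiling_def by blast

lemma tile_of_in: "n \<in> R \<Longrightarrow> tile_of T n \<in> T"
  and in_tile_of: "n \<in> R \<Longrightarrow> n \<in> tile_of T n"
proof -
  assume "n \<in> R"
  then have "\<exists>!t. t \<in> T \<and> n \<in> t"
    using dyck_tiling tiles_disjoint unfolding is_dyck_tiling_def by blast
  then have "tile_of T n \<in> T \<and> n \<in> tile_of T n"
    unfolding tile_of_def by (rule theI')
  then show "tile_of T n \<in> T" "n \<in> tile_of T n" by auto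
qed

lemma region_node: "n \<in> R \<Longrightarrow> 1 \<le> fst n \<and> 1 \<le> snd n"
  using tile_node[OF tile_is_tile[OF tile_of_in] in_tile_of] unfolding is_node_def by blast

lemma tile_of_eq: "t \<in> T \<Longrightarrow> n \<in> t \<Longrightarrow> tile_of T n = t"
  by (meson in_mono tile_of_in in_tile_of tile_subset tiles_disjoint)

lemma tile_of_subset: "n \<in> R \<Longrightarrow> tile_of T n \<subseteq> R"
  by (simp add: tile_of_in tile_subset)

lemma tile_of_eq_tile_of: "m \<in> R \<Longrightarrow> n \<in> tile_of T m \<Longrightarrow> tile_of T n = tile_of T m"
  by (simp add: tile_of_eq tile_of_in)

lemma attached_iff: "m \<in> R \<Longrightarrow> attached T m n \<longleftrightarrow> n \<in> tile_of T m"
  unfolding attached_def by (metis in_tile_of tile_of_eq tile_of_in)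

lemma NE_in_region:
  assumes "n \<in> R" "N n \<in> R" shows "NE n \<in> R"
proof -
  have "NE n \<in> {n..N n}" by (simp add: less_eq_prod_def N_def NE_def)
  then show ?thesis using order_convex[OF assms] by blast
qed

lemma dyck_region_swap: "dyck_region ((`) prod.swap ` T) (prod.swap ` R)"
proof
  show "is_dyck_tiling ((`) prod.swap ` T) (prod.swap ` R)"
    by (rule is_dyck_tiling_swap[OF dyck_tiling])
  show "finite (prod.swap ` R)" using finite_region by simp
  fix x y assume "x \<in> prod.swap ` R" "y \<in> prod.swap ` R"
  then have "prod.swap x \<in> R" "prod.swap y \<in> R"
    by (metis inj_image_mem_iff inj_swap swap_swap)+
  then have "{prod.swap x..prod.swap y} \<subseteq> R"
    by (rule order_convex)
  moreover have "prod.swap ` {x..y} \<subseteq> {prod.swap x..prod.swap y}"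
    by (auto simp: less_eq_prod_def simp del: swap_simp)
  ultimately have "prod.swap ` prod.swap ` {x..y} \<subseteq> prod.swap ` R"
    by (meson image_mono order_trans)
  then show "{x..y} \<subseteq> prod.swap ` R" by (simp add: image_image)
qed

lemma tile_of_swap: "n \<in> R \<Longrightarrow> tile_of ((`) prod.swap ` T) (prod.swap n) = prod.swap ` tile_of T n"
  using dyck_region.tile_of_eq[OF dyck_region_swap] by (simp add: tile_of_in in_tile_of)

lemma N_not_in_own_tile:
  assumes "n \<in> R" shows "N n \<notin> tile_of T n"
proof
  assume "N n \<in> tile_of T n"
  then have "N n = n"
    using inj_onD[OF tile_col_inj[OF tile_is_tile[OF tile_of_in]]] in_tile_of assms by auto
  then show False using ht_N[of n] by simp
qed

lemma column_switch:
  assumes "z \<in> R" "y \<in> R" "col z = col y" "ht z < ht y" "\<not> P z" "P y"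
  obtains x where "x \<in> R" "N x \<in> R" "\<not> P x" "P (N x)" "col x = col z"
proof -
  define m where "m = fst y - fst z"
  have y: "y = (N ^^ m) z" unfolding m_def using same_column_above assms(3,4) .
  have in_R: "(N ^^ k) z \<in> R" if "k \<le> m" for k
  proof -
    have "(N ^^ k) z \<in> {z..y}" using that by (simp add: y funpow_N less_eq_prod_def)
    then show ?thesis using order_convex[OF assms(1,2)] by blast
  qed
  obtain k where k: "k < m" "\<not> P ((N ^^ k) z)" "P (N ((N ^^ k) z))"
    using ex_switch_below[of "\<lambda>k. P ((N ^^ k) z)" m] assms(5,6) y by auto
  moreover have "(N ^^ k) z \<in> R" "N ((N ^^ k) z) \<in> R"
    using in_R[of k] in_R[of "Suc k"] k(1) by simp_all
  moreover have "col ((N ^^ k) z) = col z"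
    by (simp add: funpow_N col_def)
  ultimately show thesis using that by blast
qed

text \<open>Distinct tiles cannot cross: going one column to the right changes each height by one,
  and heights in a common column differ by an even number.\<close>
lemma noncrossing_rightwards:
  assumes t: "t1 \<in> T" "t2 \<in> T" "t1 \<noteq> t2"
    and x: "x1 \<in> t1" "x2 \<in> t2" "col x1 = col x2" "ht x1 < ht x2"
  shows "y1 \<in> t1 \<Longrightarrow> y2 \<in> t2 \<Longrightarrow> col y1 = col y2 \<Longrightarrow> col y1 = col x1 + int n \<Longrightarrow> ht y1 < ht y2"
proof (induction n arbitrary: y1 y2)
  case 0
  then show ?case
    using x inj_onD[OF tile_col_inj[OF tile_is_tile[OF t(1)]], of y1 x1]
      inj_onD[OF tile_col_inj[OF tile_is_tile[OF t(2)]], of y2 x2] by auto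
next
  case (Suc n)
  have T1: "is_tile t1" and T2: "is_tile t2" using t tile_is_tile by auto
  obtain u1 where u1: "u1 \<in> t1" "col u1 = col x1 + int n"
    using tile_col_between[OF T1 x(1) Suc.prems(1), of "col x1 + int n"] Suc.prems by auto
  obtain u2 where u2: "u2 \<in> t2" "col u2 = col x1 + int n"
    using tile_col_between[OF T2 x(2) Suc.prems(2), of "col x1 + int n"] Suc.prems x by auto
  have "ht u1 < ht u2" using Suc.IH[OF u1(1) u2(1)] u1 u2 by simp
  then have gap: "ht u1 + 2 \<le> ht u2" using ht_gap_in_column u1 u2 by simp
  have "y1 = NE u1 \<or> y1 = SE u1" using tile_step[OF T1 u1(1) Suc.prems(1)] u1 Suc.prems by simp
  then have "ht y1 \<le> ht u1 + 1" using ht_SE region_node tile_subset t(1) u1(1) by fastforce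
  moreover have "y2 = NE u2 \<or> y2 = SE u2" using tile_step[OF T2 u2(1) Suc.prems(2)] u2 Suc.prems by simp
  then have "ht u2 \<le> ht y2 + 1" using ht_SE region_node tile_subset t(2) u2(1) by fastforce
  moreover have "ht y1 \<noteq> ht y2"
    using Suc.prems t tiles_disjoint col_ht_inject by blast
  ultimately show ?case using gap by simp
qed

lemma noncrossing:
  assumes t: "t1 \<in> T" "t2 \<in> T" "t1 \<noteq> t2"
    and x: "x1 \<in> t1" "x2 \<in> t2" "col x1 = col x2" "ht x1 < ht x2"
    and y: "y1 \<in> t1" "y2 \<in> t2" "col y1 = col y2"
  shows "ht y1 < ht y2"
proof (cases "col x1 \<le> col y1")
  case True
  then show ?thesis using noncrossing_rightwards[OF t x y, of "nat (col y1 - col x1)"] by simp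
next
  case False
  show ?thesis
  proof (rule ccontr)
    assume "\<not> ht y1 < ht y2"
    moreover have "ht y1 \<noteq> ht y2" using y t tiles_disjoint col_ht_inject by blast
    ultimately have "ht y2 < ht y1" by simp
    then have "ht x2 < ht x1"
      using noncrossing_rightwards[OF t(2,1) _ y(2,1) y(3)[symmetric] _ x(2,1) x(3)[symmetric],
          of "nat (col x1 - col y1)"] t(3) False x(3) y(3) by simp
    then show False using x by simp
  qed
qed

lemma st_above_nw_lift_failure:
  assumes a: "a \<in> R" "N a \<in> R" "NW a \<in> tile_of T a" "NW (N a) \<notin> tile_of T (N a)"
  shows "st (tile_of T (N a)) = N a"
proof (rule ccontr)
  let ?t1 = "tile_of T a" and ?t2 = "tile_of T (N a)"
  assume "st ?t2 \<noteq> N a"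
  then obtain z where z: "z \<in> ?t2" "N a = NE z \<or> N a = SE z"
    using st_left_neighbourE[OF tile_is_tile[OF tile_of_in] in_tile_of] a(2) by metis
  have "1 \<le> fst z" using region_node tile_subset[OF tile_of_in[OF a(2)]] z(1) by blast
  with z(2) have "z = NW a \<or> z = NW (N a)"
    by (cases z; cases a) (auto simp: N_def NE_def SE_def NW_def)
  then show False
  proof
    assume "z = NW a"
    then have "?t1 = ?t2"
      using tiles_disjoint[OF tile_of_in[OF a(1)] tile_of_in[OF a(2)] a(3)] z(1) by simp
    then show False using N_not_in_own_tile[OF a(1)] in_tile_of[OF a(2)] by simp
  qed (use a(4) z(1) in simp)
qed

lemma nw_lift_failure_gives_end_failure:
  assumes a: "a \<in> R" "N a \<in> R" "NW a \<in> tile_of T a" "NW (N a) \<notin> tile_of T (N a)"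
  obtains x where "x \<in> R" "N x \<in> R" "en (tile_of T x) \<noteq> x" "en (tile_of T (N x)) = N x"
    "col a \<le> col x"
proof -
  let ?t1 = "tile_of T a" and ?t2 = "tile_of T (N a)"
  have t1: "?t1 \<in> T" "a \<in> ?t1" and t2: "?t2 \<in> T" "N a \<in> ?t2"
    using a tile_of_in in_tile_of by auto
  have T1: "is_tile ?t1" and T2: "is_tile ?t2" using t1 t2 tile_is_tile by auto
  have D1: "is_dyck_tile ?t1" and D2: "is_dyck_tile ?t2" using t1 t2 tile_dyck by auto
  have distinct: "?t1 \<noteq> ?t2" using N_not_in_own_tile[OF a(1)] t2(2) by auto
  have ht2: "tile_ht ?t2 = ht a + 2"
    using D2 st_above_nw_lift_failure[OF a] unfolding is_dyck_tile_def by simp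
  define E where "E = en ?t2"
  have E: "E \<in> ?t2" "ht E = ht a + 2" "col a \<le> col E"
    using en_in_tile[OF T2] en_rightmost[OF T2 t2(2)] D2 ht2
    unfolding E_def is_dyck_tile_def by auto
  define F where "F = en ?t1"
  have F: "F \<in> ?t1" "ht a + 1 \<le> ht F" "col a \<le> col F"
    using en_in_tile[OF T1] en_rightmost[OF T1 t1(2)] D1 ht_le_tile_ht[OF T1 a(3)]
    unfolding F_def is_dyck_tile_def by auto
  have "col E < col F"
  proof (rule ccontr)
    assume "\<not> col E < col F"
    then obtain w where w: "w \<in> ?t2" "col w = col F"
      using tile_col_between[OF T2 t2(2) E(1), of "col F"] F(3) by auto
    have "ht F < ht w" using noncrossing[OF t1(1) t2(1) distinct t1(2) t2(2) _ _ F(1) w(1)] w by simp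
    then have "ht F + 2 \<le> ht w" using ht_gap_in_column w by simp
    moreover have "ht w \<le> ht a + 2" using ht_le_tile_ht[OF T2 w(1)] ht2 by simp
    ultimately show False using F by simp
  qed
  then obtain z where z: "z \<in> ?t1" "col z = col E"
    using tile_col_between[OF T1 t1(2) F(1), of "col E"] E by auto
  have "ht z < ht E" using noncrossing[OF t1(1) t2(1) distinct t1(2) t2(2) _ _ z(1) E(1)] z by simp
  moreover have "en (tile_of T z) \<noteq> z" using tile_of_eq[OF t1(1) z(1)] z(2) \<open>col E < col F\<close> F_def by auto
  moreover have "en (tile_of T E) = E" using tile_of_eq[OF t2(1) E(1)] E_def by simp
  ultimately obtain x where "x \<in> R" "N x \<in> R" "en (tile_of T x) \<noteq> x" "en (tile_of T (N x)) = N x"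
      "col x = col z"
    using column_switch[of z E "\<lambda>n. en (tile_of T n) = n"] tile_subset t1(1) t2(1) z(1) E(1) z(2)
    by blast
  with E(3) z(2) show thesis using that by simp
qed

lemma end_failure_gives_lift_failure:
  assumes x: "x \<in> R" "N x \<in> R" "en (tile_of T x) \<noteq> x" "en (tile_of T (N x)) = N x"
  shows "NE x \<in> tile_of T x \<and> NE (N x) \<notin> tile_of T (N x) \<or>
    SE x \<in> R \<and> N (SE x) \<in> R \<and> NW (SE x) \<in> tile_of T (SE x) \<and> NW (N (SE x)) \<notin> tile_of T (N (SE x))"
proof -
  let ?t = "tile_of T x" and ?t2 = "tile_of T (N x)"
  have T: "is_tile ?t" and T2: "is_tile ?t2" using x tile_of_in tile_is_tile by auto
  have fst_x: "1 \<le> fst x" using region_node x(1) by simp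
  have right_of_N_x: "w \<notin> ?t2" if "col w = col x + 1" for w
    using en_rightmost[OF T2, of w] x(4) that by auto
  obtain z where z: "z \<in> ?t" "z = NE x \<or> z = SE x"
    using en_right_neighbourE[OF T in_tile_of[OF x(1)] x(3)] by blast
  from z(2) show ?thesis
  proof
    assume "z = NE x"
    then show ?thesis using z(1) right_of_N_x[of "NE (N x)"] by (simp add: N_NE)
  next
    assume z_SE: "z = SE x"
    have "SE x \<in> R" using tile_subset[OF tile_of_in[OF x(1)]] z(1) z_SE by blast
    moreover have N_SE_x: "N (SE x) \<in> R" using NE_in_region[OF x(1,2)] N_SE[OF fst_x] by simp
    moreover have "tile_of T (SE x) = ?t" using tile_of_eq_tile_of[OF x(1)] z z_SE by simp
    then have "NW (SE x) \<in> tile_of T (SE x)" using NW_SE[OF fst_x] in_tile_of[OF x(1)] by simp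
    moreover have "NW (N (SE x)) \<notin> tile_of T (N (SE x))"
    proof
      assume "NW (N (SE x)) \<in> tile_of T (N (SE x))"
      then have "tile_of T (N x) = tile_of T (N (SE x))"
        using tile_of_eq_tile_of[OF N_SE_x] N_SE[OF fst_x] NW_NE by simp
      then show False
        using in_tile_of[OF N_SE_x] right_of_N_x[of "N (SE x)"] col_SE[OF fst_x] by simp
    qed
    ultimately show ?thesis by blast
  qed
qed

end

definition depth_monotone :: "node set set \<Rightarrow> node set \<Rightarrow> bool" where
  "depth_monotone T R \<longleftrightarrow> (\<forall>a. a \<in> R \<and> N a \<in> R \<longrightarrow> dp T (N a) \<ge> dp T a)"

definition shifted_tiles_nested :: "node set set \<Rightarrow> node set \<Rightarrow> bool" where
  "shifted_tiles_nested T R \<longleftrightarrow> (\<forall>a. a \<in> R \<and> N a \<in> R \<longrightarrow> N ` tile_of T a \<subseteq> tile_of T (N a))"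

definition nw_attachment_lifts :: "node set set \<Rightarrow> node set \<Rightarrow> bool" where
  "nw_attachment_lifts T R \<longleftrightarrow> (\<forall>a. a \<in> R \<and> N a \<in> R \<and> attached T a (NW a) \<longrightarrow>
     NW (N a) \<in> R \<and> attached T (N a) (NW (N a)))"

definition ne_attachment_lifts :: "node set set \<Rightarrow> node set \<Rightarrow> bool" where
  "ne_attachment_lifts T R \<longleftrightarrow> (\<forall>a. a \<in> R \<and> N a \<in> R \<and> attached T a (NE a) \<longrightarrow>
     NE (N a) \<in> R \<and> attached T (N a) (NE (N a)))"

definition ends_descend :: "node set set \<Rightarrow> node set \<Rightarrow> bool" where
  "ends_descend T R \<longleftrightarrow> (\<forall>a. a \<in> R \<and> N a \<in> R \<and> N a = en (tile_of T (N a)) \<longrightarrow>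
     a = en (tile_of T a))"

definition starts_descend :: "node set set \<Rightarrow> node set \<Rightarrow> bool" where
  "starts_descend T R \<longleftrightarrow> (\<forall>a. a \<in> R \<and> N a \<in> R \<and> N a = st (tile_of T (N a)) \<longrightarrow>
     a = st (tile_of T a))"

lemma all_swap_iff: "(\<forall>a. P a) \<longleftrightarrow> (\<forall>b. P (prod.swap b))"
  by (metis swap_swap)

lemma nw_attachment_lifts_swap:
  "nw_attachment_lifts ((`) prod.swap ` T) (prod.swap ` R) \<longleftrightarrow> ne_attachment_lifts T R"
  unfolding nw_attachment_lifts_def ne_attachment_lifts_def
  by (subst all_swap_iff) (simp add: N_swap NW_swap attached_swap inj_image_mem_iff)

lemma ne_attachment_lifts_swap:
  "ne_attachment_lifts ((`) prod.swap ` T) (prod.swap ` R) \<longleftrightarrow> nw_attachment_lifts T R"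
  unfolding nw_attachment_lifts_def ne_attachment_lifts_def
  by (subst all_swap_iff) (simp add: N_swap NE_swap attached_swap inj_image_mem_iff)

context dyck_region
begin

lemma ends_descend_swap:
  "ends_descend ((`) prod.swap ` T) (prod.swap ` R) \<longleftrightarrow> starts_descend T R"
proof -
  have end_swap_iff: "prod.swap n = en (tile_of ((`) prod.swap ` T) (prod.swap n)) \<longleftrightarrow> n = st (tile_of T n)"
    if "n \<in> R" for n
    using that by (simp add: tile_of_swap en_swap tile_is_tile tile_of_in inj_eq[OF inj_swap])
  show ?thesis
    unfolding ends_descend_def starts_descend_def
    by (subst all_swap_iff) (simp add: N_swap inj_image_mem_iff end_swap_iff cong: conj_cong)
qed

lemma nw_attachment_lifts_iff:
  "nw_attachment_lifts T R \<longleftrightarrow>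
    (\<forall>a. a \<in> R \<and> N a \<in> R \<and> NW a \<in> tile_of T a \<longrightarrow> NW (N a) \<in> tile_of T (N a))"
  unfolding nw_attachment_lifts_def by (meson attached_iff in_mono tile_of_subset)

lemma ne_attachment_lifts_iff:
  "ne_attachment_lifts T R \<longleftrightarrow>
    (\<forall>a. a \<in> R \<and> N a \<in> R \<and> NE a \<in> tile_of T a \<longrightarrow> NE (N a) \<in> tile_of T (N a))"
  unfolding ne_attachment_lifts_def by (meson attached_iff in_mono tile_of_subset)

lemma ends_descend_imp_nw_attachment_lifts:
  assumes "ends_descend T R" shows "nw_attachment_lifts T R"
  unfolding nw_attachment_lifts_iff
proof (intro allI impI)
  fix a assume a: "a \<in> R \<and> N a \<in> R \<and> NW a \<in> tile_of T a"
  show "NW (N a) \<in> tile_of T (N a)"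
  proof (rule ccontr)
    assume "NW (N a) \<notin> tile_of T (N a)"
    with a obtain x where "x \<in> R" "N x \<in> R" "en (tile_of T x) \<noteq> x" "en (tile_of T (N x)) = N x"
      using nw_lift_failure_gives_end_failure by blast
    with assms show False unfolding ends_descend_def by metis
  qed
qed

lemma ne_attachment_lifts_imp_nw_attachment_lifts:
  assumes "ne_attachment_lifts T R" shows "nw_attachment_lifts T R"
proof (rule ccontr)
  define V where "V = {a. a \<in> R \<and> N a \<in> R \<and> NW a \<in> tile_of T a \<and> NW (N a) \<notin> tile_of T (N a)}"
  assume "\<not> nw_attachment_lifts T R"
  then have "col ` V \<noteq> {}" unfolding V_def nw_attachment_lifts_iff by blast
  moreover have "finite (col ` V)" using finite_region unfolding V_def by auto
  ultimately have "Max (col ` V) \<in> col ` V" using Max_in by blast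
  then obtain a where a: "a \<in> V" "col a = Max (col ` V)" by auto
  then obtain x where x: "x \<in> R" "N x \<in> R" "en (tile_of T x) \<noteq> x" "en (tile_of T (N x)) = N x"
      "col a \<le> col x"
    using nw_lift_failure_gives_end_failure unfolding V_def by blast
  have "SE x \<in> V"
    using end_failure_gives_lift_failure[OF x(1-4)] assms x(1,2)
    unfolding V_def ne_attachment_lifts_iff by blast
  then have "col (SE x) \<le> col a" using a Max_ge[OF \<open>finite (col ` V)\<close>] by simp
  moreover have "col (SE x) = col x + 1" using col_SE region_node x(1) by simp
  ultimately show False using x(5) by simp
qed

lemma starts_descend_imp_ne_attachment_lifts:
  assumes "starts_descend T R" shows "ne_attachment_lifts T R"
proof -
  interpret transposed: dyck_region "(`) prod.swap ` T" "prod.swap ` R"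
    by (rule dyck_region_swap)
  show ?thesis
    using transposed.ends_descend_imp_nw_attachment_lifts assms
    by (simp add: ends_descend_swap nw_attachment_lifts_swap)
qed

lemma nw_attachment_lifts_imp_ne_attachment_lifts:
  assumes "nw_attachment_lifts T R" shows "ne_attachment_lifts T R"
proof -
  interpret transposed: dyck_region "(`) prod.swap ` T" "prod.swap ` R"
    by (rule dyck_region_swap)
  show ?thesis
    using transposed.ne_attachment_lifts_imp_nw_attachment_lifts assms
    by (simp add: ne_attachment_lifts_swap nw_attachment_lifts_swap)
qed

lemma attachment_lifts_along_tile:
  assumes nw: "nw_attachment_lifts T R" and ne: "ne_attachment_lifts T R"
    and u: "t \<in> T" "u \<in> t" "x \<in> t" "col x = col u + 1" and above: "N u \<in> R \<or> N x \<in> R"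
  shows "N u \<in> R \<and> N x \<in> R \<and> tile_of T (N x) = tile_of T (N u)"
proof -
  have R: "u \<in> R" "x \<in> R" and tiles: "tile_of T u = t" "tile_of T x = t"
    using u tile_subset tile_of_eq by auto
  from tile_step[OF tile_is_tile[OF u(1)] u(2-4)] show ?thesis
  proof
    assume x_NE: "x = NE u"
    have "N u \<in> {u..N x}" by (simp add: x_NE less_eq_prod_def N_def NE_def)
    then have N_u: "N u \<in> R" using above order_convex[OF R(1)] x_NE by blast
    have "N x \<in> tile_of T (N u)"
      using ne[unfolded ne_attachment_lifts_iff, rule_format, of u] N_u R(1) tiles u(3) x_NE
      by (simp add: N_NE)
    then show ?thesis using N_u tile_of_subset tile_of_eq_tile_of by blast
  next
    assume x_SE: "x = SE u"
    have fst_u: "1 \<le> fst u" using region_node R(1) by simp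
    have N_x: "N x \<in> R"
      using above NE_in_region[OF R(1)] N_SE[OF fst_u] x_SE by auto
    have "N u \<in> tile_of T (N x)"
      using nw[unfolded nw_attachment_lifts_iff, rule_format, of x] N_x R(2) tiles u(2) x_SE
        NW_SE[OF fst_u] N_SE[OF fst_u] by (metis NW_NE)
    then show ?thesis using N_x tile_of_subset tile_of_eq_tile_of by blast
  qed
qed

lemma attachment_lifts_imp_shifted_tiles_nested:
  assumes "nw_attachment_lifts T R" "ne_attachment_lifts T R"
  shows "shifted_tiles_nested T R"
  unfolding shifted_tiles_nested_def
proof (intro allI impI subsetI)
  fix a y assume a: "a \<in> R \<and> N a \<in> R" and "y \<in> N ` tile_of T a"
  then obtain x where x: "x \<in> tile_of T a" "y = N x" by blast
  have "N x \<in> R \<and> tile_of T (N x) = tile_of T (N a)"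
  proof (rule tile_step_invariant[of _ a _ "\<lambda>v. N v \<in> R \<and> tile_of T (N v) = tile_of T (N a)"])
    show "is_tile (tile_of T a)" "a \<in> tile_of T a" using a tile_of_in tile_is_tile in_tile_of by auto
    show "x \<in> tile_of T a" by (fact x(1))
    show "N a \<in> R \<and> tile_of T (N a) = tile_of T (N a)" using a by simp
  next
    fix u w assume "u \<in> tile_of T a" "w \<in> tile_of T a" "col w = col u + 1"
    with attachment_lifts_along_tile[OF assms tile_of_in] a
    show "(N u \<in> R \<and> tile_of T (N u) = tile_of T (N a)) \<longleftrightarrow>
        (N w \<in> R \<and> tile_of T (N w) = tile_of T (N a))"
      by metis
  qed
  then show "y \<in> tile_of T (N a)" using in_tile_of x(2) by metis
qed

lemma shifted_tiles_nested_imp_right_cover_inclusive: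
  assumes "shifted_tiles_nested T R" shows "right_cover_inclusive T R"
  unfolding right_cover_inclusive_def
proof (intro allI impI)
  fix a assume a: "a \<in> R \<and> N a \<in> R"
  then have "N (en (tile_of T a)) \<in> tile_of T (N a)"
    using assms en_in_tile tile_is_tile tile_of_in unfolding shifted_tiles_nested_def by blast
  then show "col (en (tile_of T a)) \<le> col (en (tile_of T (N a)))"
    using en_rightmost[OF tile_is_tile[OF tile_of_in]] a by fastforce
qed

lemma shifted_tiles_nested_imp_left_cover_inclusive:
  assumes "shifted_tiles_nested T R" shows "left_cover_inclusive T R"
  unfolding left_cover_inclusive_def
proof (intro allI impI)
  fix a assume a: "a \<in> R \<and> N a \<in> R"
  then have "N (st (tile_of T a)) \<in> tile_of T (N a)"
    using assms st_in_tile tile_is_tile tile_of_in unfolding shifted_tiles_nested_def by blast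
  then show "col (st (tile_of T (N a))) \<le> col (st (tile_of T a))"
    using st_leftmost[OF tile_is_tile[OF tile_of_in]] a by fastforce
qed

lemma shifted_tiles_nested_imp_depth_monotone:
  assumes "shifted_tiles_nested T R" shows "depth_monotone T R"
  unfolding depth_monotone_def
proof (intro allI impI)
  fix a assume a: "a \<in> R \<and> N a \<in> R"
  let ?t1 = "tile_of T a" and ?t2 = "tile_of T (N a)"
  have T1: "is_tile ?t1" and T2: "is_tile ?t2" using a tile_of_in tile_is_tile by auto
  have "N (st ?t1) \<in> ?t2"
    using assms a st_in_tile[OF T1] unfolding shifted_tiles_nested_def by blast
  then have "tile_ht ?t1 + 2 \<le> tile_ht ?t2"
    using ht_le_tile_ht[OF T2] tile_dyck[OF tile_of_in] a unfolding is_dyck_tile_def by fastforce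
  moreover have "ht a \<le> tile_ht ?t1" using ht_le_tile_ht[OF T1 in_tile_of] a by simp
  ultimately show "dp T a \<le> dp T (N a)" unfolding dp_def by simp
qed

lemma right_cover_inclusive_imp_ends_descend:
  assumes "right_cover_inclusive T R" shows "ends_descend T R"
  unfolding ends_descend_def
proof (intro allI impI)
  fix a assume a: "a \<in> R \<and> N a \<in> R \<and> N a = en (tile_of T (N a))"
  have T1: "is_tile (tile_of T a)" using a tile_of_in tile_is_tile by auto
  have "col (en (tile_of T a)) \<le> col a"
    using assms a unfolding right_cover_inclusive_def by (metis col_N)
  with en_rightmost[OF T1 in_tile_of] a show "a = en (tile_of T a)"
    by (metis order_antisym en_in_tile[OF T1] in_tile_of inj_onD[OF tile_col_inj[OF T1]])
qed

lemma left_cover_inclusive_imp_starts_descend: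
  assumes "left_cover_inclusive T R" shows "starts_descend T R"
  unfolding starts_descend_def
proof (intro allI impI)
  fix a assume a: "a \<in> R \<and> N a \<in> R \<and> N a = st (tile_of T (N a))"
  have T1: "is_tile (tile_of T a)" using a tile_of_in tile_is_tile by auto
  have "col a \<le> col (st (tile_of T a))"
    using assms a unfolding left_cover_inclusive_def by (metis col_N)
  with st_leftmost[OF T1 in_tile_of] a show "a = st (tile_of T a)"
    by (metis order_antisym st_in_tile[OF T1] in_tile_of inj_onD[OF tile_col_inj[OF T1]])
qed

lemma depth_monotone_imp_nw_attachment_lifts:
  assumes "depth_monotone T R" shows "nw_attachment_lifts T R"
  unfolding nw_attachment_lifts_iff
proof (intro allI impI)
  fix a assume a: "a \<in> R \<and> N a \<in> R \<and> NW a \<in> tile_of T a"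
  show "NW (N a) \<in> tile_of T (N a)"
  proof (rule ccontr)
    assume "NW (N a) \<notin> tile_of T (N a)"
    with a have "st (tile_of T (N a)) = N a" using st_above_nw_lift_failure by blast
    then have "tile_ht (tile_of T (N a)) = ht (N a)"
      using tile_dyck[OF tile_of_in, of "N a"] a unfolding is_dyck_tile_def by simp
    then have "dp T (N a) = 0" unfolding dp_def by simp
    moreover have "dp T a \<ge> 1"
      using ht_le_tile_ht[OF tile_is_tile[OF tile_of_in]] a unfolding dp_def by fastforce
    ultimately show False using assms a unfolding depth_monotone_def by fastforce
  qed
qed

theorem cover_inclusion_conditions_equivalent:
  "(cover_inclusive T R \<longleftrightarrow> depth_monotone T R) \<and>
   (depth_monotone T R \<longleftrightarrow> shifted_tiles_nested T R) \<and>
   (shifted_tiles_nested T R \<longleftrightarrow> nw_attachment_lifts T R) \<and>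
   (nw_attachment_lifts T R \<longleftrightarrow> ends_descend T R) \<and>
   (ends_descend T R \<longleftrightarrow> right_cover_inclusive T R) \<and>
   (right_cover_inclusive T R \<longleftrightarrow> ne_attachment_lifts T R) \<and>
   (ne_attachment_lifts T R \<longleftrightarrow> starts_descend T R) \<and>
   (starts_descend T R \<longleftrightarrow> left_cover_inclusive T R)"
  using shifted_tiles_nested_imp_right_cover_inclusive shifted_tiles_nested_imp_left_cover_inclusive
    shifted_tiles_nested_imp_depth_monotone depth_monotone_imp_nw_attachment_lifts
    right_cover_inclusive_imp_ends_descend left_cover_inclusive_imp_starts_descend
    ends_descend_imp_nw_attachment_lifts starts_descend_imp_ne_attachment_lifts
    nw_attachment_lifts_imp_ne_attachment_lifts ne_attachment_lifts_imp_nw_attachment_lifts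
    attachment_lifts_imp_shifted_tiles_nested
  unfolding cover_inclusive_def by blast

end

lemma skew_order_convex:
  assumes lam: "is_partition lam" and mu: "is_partition mu"
    and x: "x \<in> skew lam mu" and y: "y \<in> skew lam mu"
  shows "{x..y} \<subseteq> skew lam mu"
proof
  fix z assume "z \<in> {x..y}"
  then have z: "fst x \<le> fst z" "snd x \<le> snd z" "fst z \<le> fst y" "snd z \<le> snd y"
    by (auto simp: less_eq_prod_def)
  have x1: "1 \<le> fst x" "1 \<le> snd x" "mu (fst x) < snd x" and y1: "snd y \<le> lam (fst y)"
    using x y unfolding skew_def diagram_def by auto
  have "lam (fst y) \<le> lam (fst z)" "mu (fst z) \<le> mu (fst x)"
    using lam mu x1 z unfolding is_partition_def by auto
  with x1 y1 z show "z \<in> skew lam mu"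
    by (cases z) (auto simp: skew_def diagram_def)
qed

lemma finite_skew:
  assumes "is_partition lam" shows "finite (skew lam mu)"
proof -
  have "diagram lam \<subseteq> {i. 1 \<le> i \<and> lam i \<noteq> 0} \<times> {..lam 1}"
  proof
    fix p assume "p \<in> diagram lam"
    then obtain a b where p: "p = (a, b)" "1 \<le> a" "1 \<le> b" "b \<le> lam a" unfolding diagram_def by auto
    moreover have "lam a \<le> lam 1" using assms p unfolding is_partition_def by auto
    ultimately show "p \<in> {i. 1 \<le> i \<and> lam i \<noteq> 0} \<times> {..lam 1}" by auto
  qed
  moreover have "finite {i. 1 \<le> i \<and> lam i \<noteq> 0}" using assms unfolding is_partition_def by auto
  ultimately have "finite (diagram lam)" by (simp add: finite_subset)
  then show ?thesis unfolding skew_def by auto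
qed

lemma dyck_region_skew:
  "is_partition lam \<Longrightarrow> is_partition mu \<Longrightarrow> is_dyck_tiling T (skew lam mu) \<Longrightarrow>
    dyck_region T (skew lam mu)"
  by unfold_locales (simp_all add: finite_skew skew_order_convex)

theorem theorem3p1:
  fixes lam mu :: "nat \<Rightarrow> nat" and T :: "node set set"
  assumes "is_partition lam" and "is_partition mu" and "contains lam mu"
    and "is_dyck_tiling T (skew lam mu)"
  defines "R \<equiv> skew lam mu"
  defines "C1 \<equiv> cover_inclusive T R"
    and "C2 \<equiv> (\<forall>a. a \<in> R \<and> N a \<in> R \<longrightarrow> dp T (N a) \<ge> dp T a)"
    and "C3 \<equiv> (\<forall>a. a \<in> R \<and> N a \<in> R \<longrightarrow> N ` tile_of T a \<subseteq> tile_of T (N a))"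
    and "C4 \<equiv> (\<forall>a. a \<in> R \<and> N a \<in> R \<and> attached T a (NW a) \<longrightarrow>
                 NW (N a) \<in> R \<and> attached T (N a) (NW (N a)))"
    and "C5 \<equiv> (\<forall>a. a \<in> R \<and> N a \<in> R \<and> N a = en (tile_of T (N a)) \<longrightarrow>
                 a = en (tile_of T a))"
    and "C6 \<equiv> right_cover_inclusive T R"
    and "C7 \<equiv> (\<forall>a. a \<in> R \<and> N a \<in> R \<and> attached T a (NE a) \<longrightarrow>
                 NE (N a) \<in> R \<and> attached T (N a) (NE (N a)))"
    and "C8 \<equiv> (\<forall>a. a \<in> R \<and> N a \<in> R \<and> N a = st (tile_of T (N a)) \<longrightarrow>
                 a = st (tile_of T a))"
    and "C9 \<equiv> left_cover_inclusive T R"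
  shows "(C1 \<longleftrightarrow> C2) \<and> (C2 \<longleftrightarrow> C3) \<and> (C3 \<longleftrightarrow> C4) \<and> (C4 \<longleftrightarrow> C5) \<and>
         (C5 \<longleftrightarrow> C6) \<and> (C6 \<longleftrightarrow> C7) \<and> (C7 \<longleftrightarrow> C8) \<and> (C8 \<longleftrightarrow> C9)"
proof -
  interpret dyck_region T R
    unfolding R_def using assms(1,2,4) by (rule dyck_region_skew)
  show ?thesis
    using cover_inclusion_conditions_equivalent
    unfolding C1_def C2_def C3_def C4_def C5_def C6_def C7_def C8_def C9_def
      depth_monotone_def shifted_tiles_nested_def nw_attachment_lifts_def ends_descend_def
      ne_attachment_lifts_def starts_descend_def .
qed

end
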